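(* Let $\mathcal{G}$ be a finite connected undirected simple graph with $N$ nodes which is not a tree, with adjacency matrix $(a_{ij})$ and non-backtracking centralities $x_1,\dots,x_N$. Let $\mathcal{W}$ be the weighted network with weights $w_{ij}=a_{ij}x_ix_j$, strengths $s_i=\sum_k w_{ik}$, total strength $s=\sum_{i,j}w_{ij}$, and Laplacian $\mathbf{L}=\mathbf{S}-\mathbf{W}$ with $\mathbf{S}=\mathrm{diag}(s_1,\dots,s_N)$, $\mathbf{W}=(w_{ij})$. Let $0=\theta_1<\theta_2\le\dots\le\theta_N$ be the eigenvalues of $\mathbf{L}$ with orthonormal eigenvectors $\phi_1,\dots,\phi_N$, $\phi_k=(\phi_{k1},\dots,\phi_{kN})^\top$. Then for the NBCRW on $\mathcal{G}$: (i) the hitting time from node $i$ to node $j$ is $$T_{ij}=\sum_{z=1}^N s_z\sum_{k=2}^N\frac{1}{\theta_k}\left(\phi_{kj}^2-\phi_{ki}\phi_{kj}-\phi_{kj}\phi_{kz}+\phi_{ki}\phi_{kz}\right);$$ (ii) the partial mean hitting time to node $j$ is $$T_j=\frac{N}{N-1}\sum_{k=2}^N\frac{1}{\theta_k}\left(s\,\phi_{kj}^2-\phi_{kj}\sum_{z=1}^N s_z\phi_{kz}\right);$$ (iii) the global mean hitting time is $$\langle T\rangle=\frac{s}{N-1}\sum_{k=2}^N\frac{1}{\theta_k}.$$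
   Context: The non-backtracking matrix $\mathbf{B}$ of $\mathcal{G}$ is the $2E\times 2E$ matrix indexed by directed edges $i\to j$ (each undirected edge gives two directed edges), with $B_{i\to j,\,k\to l}=1$ if $j=k$ and $i\neq l$, and $0$ otherwise; $v=(v_{i\to j})$ is a non-negative eigenvector for its leading (Perron–Frobenius) eigenvalue. The non-backtracking centrality of node $i$ is $x_i=\sum_{j\in\mathcal{N}_i}v_{i\to j}$. The NBCRW is the Markov chain with $p_{ij}=a_{ij}x_j/\sum_k a_{ik}x_k$ (assumed defined). The hitting time $T_{ij}$ ($i\ne j$) is the expected number of steps for the walk started at $i$ to reach $j$ for the first time, with $T_{jj}=0$; the partial mean hitting time is $T_j=\frac{1}{N-1}\sum_{i=1}^N T_{ij}$; the global mean hitting time is $\langle T\rangle=\frac{1}{N(N-1)}\sum_{i}\sum_{j\ne i}T_{ij}$. *)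

theory Defs
  imports Complex_Main
begin

definition adjm :: "('n \<Rightarrow> 'n \<Rightarrow> bool) \<Rightarrow> 'n \<Rightarrow> 'n \<Rightarrow> real" where
  "adjm G i j = (if G i j then 1 else 0)"

definition simple_graph :: "('n \<Rightarrow> 'n \<Rightarrow> bool) \<Rightarrow> bool" where
  "simple_graph G \<longleftrightarrow> (\<forall>i j. G i j \<longrightarrow> G j i) \<and> (\<forall>i. \<not> G i i)"

definition connected_graph :: "('n \<Rightarrow> 'n \<Rightarrow> bool) \<Rightarrow> bool" where
  "connected_graph G \<longleftrightarrow> (\<forall>i j. G\<^sup>*\<^sup>* i j)"

definition is_cycle :: "('n \<Rightarrow> 'n \<Rightarrow> bool) \<Rightarrow> 'n list \<Rightarrow> bool" where
  "is_cycle G vs \<longleftrightarrow> length vs \<ge> 3 \<and> distinct vs \<and>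
     (\<forall>k < length vs - 1. G (vs ! k) (vs ! (k + 1))) \<and> G (last vs) (hd vs)"

definition is_tree :: "('n \<Rightarrow> 'n \<Rightarrow> bool) \<Rightarrow> bool" where
  "is_tree G \<longleftrightarrow> connected_graph G \<and> \<not> (\<exists>vs. is_cycle G vs)"

definition dir_edges :: "('n \<Rightarrow> 'n \<Rightarrow> bool) \<Rightarrow> ('n \<times> 'n) set" where
  "dir_edges G = {(i, j). G i j}"

definition nb_matrix :: "('n \<Rightarrow> 'n \<Rightarrow> bool) \<Rightarrow> 'n \<times> 'n \<Rightarrow> 'n \<times> 'n \<Rightarrow> real" where
  "nb_matrix G e f =
     (if e \<in> dir_edges G \<and> f \<in> dir_edges G \<and> snd e = fst f \<and> fst e \<noteq> snd f then 1 else 0)"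

definition nb_eigenvalue :: "('n \<Rightarrow> 'n \<Rightarrow> bool) \<Rightarrow> complex \<Rightarrow> bool" where
  "nb_eigenvalue G \<mu> \<longleftrightarrow> (\<exists>u :: 'n \<times> 'n \<Rightarrow> complex.
      (\<exists>e \<in> dir_edges G. u e \<noteq> 0) \<and>
      (\<forall>e \<in> dir_edges G. (\<Sum>f \<in> dir_edges G. of_real (nb_matrix G e f) * u f) = \<mu> * u e))"

definition nb_perron_vector :: "('n \<Rightarrow> 'n \<Rightarrow> bool) \<Rightarrow> real \<Rightarrow> ('n \<times> 'n \<Rightarrow> real) \<Rightarrow> bool" where
  "nb_perron_vector G lam v \<longleftrightarrow>
     (\<forall>e \<in> dir_edges G. v e \<ge> 0) \<and> (\<exists>e \<in> dir_edges G. v e \<noteq> 0) \<and>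
     (\<forall>e \<in> dir_edges G. (\<Sum>f \<in> dir_edges G. nb_matrix G e f * v f) = lam * v e) \<and>
     (\<forall>\<mu>. nb_eigenvalue G \<mu> \<longrightarrow> cmod \<mu> \<le> lam)"

definition nb_centrality :: "('n::finite \<Rightarrow> 'n \<Rightarrow> bool) \<Rightarrow> ('n \<times> 'n \<Rightarrow> real) \<Rightarrow> 'n \<Rightarrow> real" where
  "nb_centrality G v i = (\<Sum>j \<in> {j. G i j}. v (i, j))"

definition nbcrw_prob :: "('n::finite \<Rightarrow> 'n \<Rightarrow> bool) \<Rightarrow> ('n \<Rightarrow> real) \<Rightarrow> 'n \<Rightarrow> 'n \<Rightarrow> real" where
  "nbcrw_prob G x i j = adjm G i j * x j / (\<Sum>k\<in>UNIV. adjm G i k * x k)"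

text \<open>first_hit P j n i: probability that the chain with transition matrix P started at i
  visits j for the first time (at a positive time) at step n.\<close>

fun first_hit :: "('n::finite \<Rightarrow> 'n \<Rightarrow> real) \<Rightarrow> 'n \<Rightarrow> nat \<Rightarrow> 'n \<Rightarrow> real" where
  "first_hit P j 0 i = 0"
| "first_hit P j (Suc 0) i = P i j"
| "first_hit P j (Suc (Suc n)) i = (\<Sum>k \<in> {k. k \<noteq> j}. P i k * first_hit P j (Suc n) k)"

definition hitting_time :: "('n::finite \<Rightarrow> 'n \<Rightarrow> real) \<Rightarrow> 'n \<Rightarrow> 'n \<Rightarrow> real" where
  "hitting_time P i j = (if i = j then 0 else (\<Sum>n. real n * first_hit P j n i))"

definition partial_mean_hitting :: "('n::finite \<Rightarrow> 'n \<Rightarrow> real) \<Rightarrow> 'n \<Rightarrow> real" where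
  "partial_mean_hitting P j = (1 / (real (card (UNIV :: 'n set)) - 1)) * (\<Sum>i\<in>UNIV. hitting_time P i j)"

definition global_mean_hitting :: "('n::finite \<Rightarrow> 'n \<Rightarrow> real) \<Rightarrow> real" where
  "global_mean_hitting P =
     (1 / (real (card (UNIV :: 'n set)) * (real (card (UNIV :: 'n set)) - 1))) * (\<Sum>i\<in>UNIV. \<Sum>j \<in> {j. j \<noteq> i}. hitting_time P i j)"

definition nb_weight :: "('n \<Rightarrow> 'n \<Rightarrow> bool) \<Rightarrow> ('n \<Rightarrow> real) \<Rightarrow> 'n \<Rightarrow> 'n \<Rightarrow> real" where
  "nb_weight G x i j = adjm G i j * x i * x j"

definition strength :: "('n::finite \<Rightarrow> 'n \<Rightarrow> bool) \<Rightarrow> ('n \<Rightarrow> real) \<Rightarrow> 'n \<Rightarrow> real" where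
  "strength G x i = (\<Sum>k\<in>UNIV. nb_weight G x i k)"

definition total_strength :: "('n::finite \<Rightarrow> 'n \<Rightarrow> bool) \<Rightarrow> ('n \<Rightarrow> real) \<Rightarrow> real" where
  "total_strength G x = (\<Sum>i\<in>UNIV. \<Sum>j\<in>UNIV. nb_weight G x i j)"

definition laplacian :: "('n::finite \<Rightarrow> 'n \<Rightarrow> bool) \<Rightarrow> ('n \<Rightarrow> real) \<Rightarrow> 'n \<Rightarrow> 'n \<Rightarrow> real" where
  "laplacian G x i j = (if i = j then strength G x i else 0) - nb_weight G x i j"

end

theory Submission
  imports Defs "HOL-Analysis.Cartesian_Space"
begin

text \<open>Once the centralities are known to be positive, the NBCRW is the ordinary random walk
  \<open>p\<^sub>i\<^sub>j = w\<^sub>i\<^sub>j / s\<^sub>i\<close> on the weighted network \<open>W\<close>. For a fixed target \<open>j\<close>, the hitting times are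
  the unique solution of the first-step equations \<open>T\<^sub>i\<^sub>j = 1 + \<Sum>\<^sub>k\<^sub>\<noteq>\<^sub>j p\<^sub>i\<^sub>k T\<^sub>k\<^sub>j\<close>
  (\<open>i \<noteq> j\<close>), and the spectral expression solves them because
  \<open>G = \<Sum>\<^sub>k\<^sub>\<ge>\<^sub>2 \<phi>\<^sub>k \<phi>\<^sub>k\<^sup>T / \<theta>\<^sub>k\<close> inverts \<open>L\<close> up to the projection onto the constants:
  \<open>L G = I - J/N\<close>. Uniqueness comes from the survival probabilities of the walk killed at \<open>j\<close>:
  they are summable, and summation by parts turns their sum into the mean first passage time.
  The mean hitting times follow by summing, since \<open>\<Sum>\<^sub>i \<phi>\<^sub>k\<^sub>i = 0\<close> for \<open>k \<ge> 2\<close>.\<close>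

section \<open>Decreasing summable sequences\<close>

lemma antimono_summable_index_times_tendsto_zero:
  fixes a :: "nat \<Rightarrow> real"
  assumes nonneg: "\<And>n. 0 \<le> a n" and decr: "\<And>n. a (Suc n) \<le> a n" and summ: "summable a"
  shows "(\<lambda>n. real n * a n) \<longlonglongrightarrow> 0"
proof -
  define A where "A m = (\<Sum>n<m. a n)" for m
  have A_lim: "A \<longlonglongrightarrow> suminf a"
    unfolding A_def using summ by (rule summable_LIMSEQ)
  have "(\<lambda>m. A (m div 2)) \<longlonglongrightarrow> suminf a"
    by (rule filterlim_compose[OF A_lim filterlim_at_top_div_const_nat]) simp
  hence upper: "(\<lambda>m. 2 * (A m - A (m div 2))) \<longlonglongrightarrow> 2 * (suminf a - suminf a)"
    by (intro tendsto_intros A_lim)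
  have bound: "real m * a m \<le> 2 * (A m - A (m div 2))" for m
  proof -
    \<comment> \<open>each of the last \<open>m - m div 2 \<ge> m/2\<close> terms of \<open>A m\<close> dominates \<open>a m\<close>\<close>
    have "real m * a m \<le> 2 * (real (m - m div 2) * a m)"
    proof -
      have "real m \<le> 2 * real (m - m div 2)" by linarith
      from mult_right_mono[OF this nonneg[of m]] show ?thesis by (simp only: mult.assoc)
    qed
    also have "real (m - m div 2) * a m = (\<Sum>n\<in>{m div 2..<m}. a m)" by simp
    also have "\<dots> \<le> (\<Sum>n\<in>{m div 2..<m}. a n)"
      by (intro sum_mono decseqD[OF decseq_SucI[of a, OF decr]]) auto
    also have "\<dots> = A m - A (m div 2)"
      unfolding A_def using sum_diff_nat_ivl[of 0 "m div 2" m a] by (simp add: atLeast0LessThan)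
    finally show ?thesis by simp
  qed
  show ?thesis
    by (rule real_tendsto_sandwich[OF _ _ tendsto_const upper[simplified]])
       (use nonneg bound in \<open>auto intro: always_eventually\<close>)
qed

lemma antimono_sums_index_times_decrement:
  fixes a :: "nat \<Rightarrow> real"
  assumes nonneg: "\<And>n. 0 \<le> a n" and decr: "\<And>n. a (Suc n) \<le> a n" and sums: "a sums E"
  shows "(\<lambda>n. real (Suc n) * (a n - a (Suc n))) sums E"
proof -
  have partial: "(\<Sum>n<m. real (Suc n) * (a n - a (Suc n))) = (\<Sum>n<m. a n) - real m * a m" for m
    by (induction m) (simp_all add: algebra_simps)
  have "(\<lambda>m. (\<Sum>n<m. a n) - real m * a m) \<longlonglongrightarrow> E - 0"
    using sums antimono_summable_index_times_tendsto_zero[OF nonneg decr sums_summable[OF sums]]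
    unfolding sums_def by (rule tendsto_diff)
  thus ?thesis unfolding sums_def partial by simp
qed

section \<open>First passage times of a finite Markov chain\<close>

definition taboo_step :: "('n::finite \<Rightarrow> 'n \<Rightarrow> real) \<Rightarrow> 'n \<Rightarrow> ('n \<Rightarrow> real) \<Rightarrow> 'n \<Rightarrow> real" where
  "taboo_step P j u i = (\<Sum>k \<in> {k. k \<noteq> j}. P i k * u k)"

text \<open>\<open>avoid_prob P j n i\<close> is the probability that the chain started at \<open>i\<close> does not visit \<open>j\<close>
  at any of the times \<open>1, \<dots>, n\<close>.\<close>

abbreviation avoid_prob :: "('n::finite \<Rightarrow> 'n \<Rightarrow> real) \<Rightarrow> 'n \<Rightarrow> nat \<Rightarrow> 'n \<Rightarrow> real" where
  "avoid_prob P j n \<equiv> (taboo_step P j ^^ n) (\<lambda>_. 1)"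

lemma taboo_step_pow_add:
  "(taboo_step P j ^^ m) (\<lambda>i. u i + v i) = (\<lambda>i. (taboo_step P j ^^ m) u i + (taboo_step P j ^^ m) v i)"
  by (induction m) (simp_all add: taboo_step_def algebra_simps sum.distrib)

lemma taboo_step_pow_scale:
  "(taboo_step P j ^^ m) (\<lambda>i. c * u i) = (\<lambda>i. c * (taboo_step P j ^^ m) u i)"
  by (induction m) (simp_all add: taboo_step_def algebra_simps sum_distrib_left)

lemma taboo_step_pow_mono:
  assumes "\<And>i k. 0 \<le> P i k" and "\<And>i. u i \<le> v i"
  shows "(taboo_step P j ^^ m) u i \<le> (taboo_step P j ^^ m) v i"
  using assms by (induction m arbitrary: i) (auto simp: taboo_step_def intro!: sum_mono mult_left_mono)

lemma first_hit_nonneg: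
  assumes "\<And>i k. 0 \<le> P i k"
  shows "0 \<le> first_hit P j n i"
  using assms by (induction P j n i rule: first_hit.induct) (auto intro!: sum_nonneg)

lemma sum_split_off:
  fixes f :: "'n::finite \<Rightarrow> 'a::comm_monoid_add"
  shows "(\<Sum>k\<in>UNIV. f k) = f j + (\<Sum>k \<in> {k. k \<noteq> j}. f k)"
proof -
  have "UNIV - {j} = {k. k \<noteq> j}" by auto
  thus ?thesis using sum.remove[of UNIV j f] by simp
qed

lemma first_hit_eq_avoid_prob_diff:
  assumes stoch: "\<And>i. (\<Sum>k\<in>UNIV. P i k) = 1"
  shows "first_hit P j (Suc n) i = avoid_prob P j n i - avoid_prob P j (Suc n) i"
proof (induction n arbitrary: i)
  case 0
  show ?case using stoch[of i] sum_split_off[of "P i" j] by (simp add: taboo_step_def)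
next
  case (Suc n)
  show ?case by (simp add: Suc taboo_step_def algebra_simps sum_subtractf)
qed

lemma avoid_prob_nonneg:
  assumes "\<And>i k. 0 \<le> P i k"
  shows "0 \<le> avoid_prob P j n i"
  using assms by (induction n arbitrary: i) (auto simp: taboo_step_def intro!: sum_nonneg)

lemma avoid_prob_Suc_le:
  assumes "\<And>i k. 0 \<le> P i k" and "\<And>i. (\<Sum>k\<in>UNIV. P i k) = 1"
  shows "avoid_prob P j (Suc n) i \<le> avoid_prob P j n i"
  using first_hit_eq_avoid_prob_diff[of P, OF assms(2), of j n i]
    first_hit_nonneg[of P, OF assms(1), of j "Suc n" i]
  by simp

lemma avoid_prob_sums_solution:
  fixes P :: "'n::finite \<Rightarrow> 'n \<Rightarrow> real"
  assumes nonneg: "\<And>i k. 0 \<le> P i k" and stoch: "\<And>i. (\<Sum>k\<in>UNIV. P i k) = 1"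
    and E: "\<And>i. E i = 1 + taboo_step P j E i"
  shows "(\<lambda>n. avoid_prob P j n i) sums E i"
proof -
  let ?r = "\<lambda>n. avoid_prob P j n i" and ?Q = "\<lambda>m. (taboo_step P j ^^ m) E i"
  have unroll: "E i' = (\<Sum>n<m. avoid_prob P j n i') + (taboo_step P j ^^ m) E i'" for m i'
  proof (induction m arbitrary: i')
    case (Suc m)
    have "E = (\<lambda>i. 1 + taboo_step P j E i)" by (rule ext) (rule E)
    hence "(taboo_step P j ^^ m) E i' = (taboo_step P j ^^ m) (\<lambda>i. 1 + taboo_step P j E i) i'"
      by (rule arg_cong)
    also have "\<dots> = avoid_prob P j m i' + (taboo_step P j ^^ Suc m) E i'"
      by (simp only: taboo_step_pow_add funpow_Suc_right comp_def)
    finally show ?case using Suc[of i'] by (simp only: sum.lessThan_Suc)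
  qed simp
  define M where "M = (\<Sum>i\<in>UNIV. \<bar>E i\<bar>)"
  have E_bound: "-M \<le> E i' \<and> E i' \<le> M" for i'
    using member_le_sum[of i' UNIV "\<lambda>i. \<bar>E i\<bar>"] unfolding M_def by auto
  have Q_bound: "\<bar>?Q m\<bar> \<le> M * ?r m" for m
    using taboo_step_pow_mono[where P = P and u = E and v = "\<lambda>_. M * 1" and j = j and m = m and i = i]
      taboo_step_pow_mono[where P = P and u = "\<lambda>_. (-M) * 1" and v = E and j = j and m = m and i = i]
      nonneg E_bound
    unfolding taboo_step_pow_scale by auto
  have r_decr: "?r (Suc n) \<le> ?r n" for n
    by (rule avoid_prob_Suc_le[OF nonneg stoch])
  have r_le_1: "?r n \<le> 1" for n
    using decseqD[OF decseq_SucI[of ?r, OF r_decr], of 0 n] by simp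
  have M_nonneg: "0 \<le> M" using E_bound[of i] by linarith
  have "summable ?r"
  proof (rule bounded_imp_summable[OF avoid_prob_nonneg[of P, OF nonneg]])
    fix m
    show "(\<Sum>n\<le>m. ?r n) \<le> E i + M"
      using unroll[of i "Suc m"] Q_bound[of "Suc m"] mult_left_le[OF r_le_1[of "Suc m"] M_nonneg]
      unfolding lessThan_Suc_atMost by linarith
  qed
  hence "?r \<longlonglongrightarrow> 0" by (rule summable_LIMSEQ_zero)
  hence Mr: "(\<lambda>m. M * ?r m) \<longlonglongrightarrow> 0" by (rule tendsto_mult_right_zero)
  have "(\<lambda>m. \<bar>?Q m\<bar>) \<longlonglongrightarrow> 0"
    by (rule real_tendsto_sandwich[OF _ _ tendsto_const Mr]) (use Q_bound in auto)
  hence "?Q \<longlonglongrightarrow> 0" by (rule tendsto_rabs_zero_cancel)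
  hence "(\<lambda>m. E i - ?Q m) \<longlonglongrightarrow> E i - 0" by (intro tendsto_intros)
  moreover have "(\<lambda>m. E i - ?Q m) = (\<lambda>m. \<Sum>n<m. ?r n)"
  proof
    show "E i - ?Q m = (\<Sum>n<m. ?r n)" for m using unroll[of i m] by linarith
  qed
  ultimately show ?thesis unfolding sums_def by simp
qed

lemma hitting_time_eq_taboo_solution:
  fixes P :: "'n::finite \<Rightarrow> 'n \<Rightarrow> real"
  assumes nonneg: "\<And>i k. 0 \<le> P i k" and stoch: "\<And>i. (\<Sum>k\<in>UNIV. P i k) = 1"
    and E: "\<And>i. i \<noteq> j \<Longrightarrow> E i = 1 + taboo_step P j E i" and "i \<noteq> j"
  shows "hitting_time P i j = E i"
proof -
  define E' where "E' i = 1 + taboo_step P j E i" for i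
  have "taboo_step P j E' = taboo_step P j E"
    unfolding taboo_step_def by (intro ext sum.cong) (auto simp: E'_def E)
  hence "E' i = 1 + taboo_step P j E' i" for i by (simp add: E'_def)
  hence "(\<lambda>n. avoid_prob P j n i) sums E' i"
    by (rule avoid_prob_sums_solution[OF nonneg stoch])
  hence "(\<lambda>n. real (Suc n) * (avoid_prob P j n i - avoid_prob P j (Suc n) i)) sums E' i"
    using antimono_sums_index_times_decrement[where a = "\<lambda>n. avoid_prob P j n i"]
      avoid_prob_nonneg[of P, OF nonneg] avoid_prob_Suc_le[of P, OF nonneg stoch]
    by blast
  hence "(\<lambda>n. real (Suc n) * first_hit P j (Suc n) i) sums E' i"
    by (simp only: first_hit_eq_avoid_prob_diff[of P, OF stoch])
  hence "(\<lambda>n. real n * first_hit P j n i) sums E' i"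
    using sums_Suc_iff[of "\<lambda>n. real n * first_hit P j n i"] by simp
  thus ?thesis using \<open>i \<noteq> j\<close> E by (simp add: hitting_time_def E'_def sums_iff)
qed

section \<open>Random walks on weighted graphs\<close>

lemma orthonormal_family_complete:
  fixes \<phi> :: "nat \<Rightarrow> 'n::finite \<Rightarrow> real"
  assumes orth: "\<And>k l. k \<in> {1..CARD('n)} \<Longrightarrow> l \<in> {1..CARD('n)} \<Longrightarrow>
      (\<Sum>i\<in>UNIV. \<phi> k i * \<phi> l i) = (if k = l then 1 else 0)"
  shows "(\<Sum>k = 1..CARD('n). \<phi> k a * \<phi> k b) = (if a = b then 1 else 0)"
proof -
  obtain g :: "'n \<Rightarrow> nat" where g: "bij_betw g UNIV {1..CARD('n)}"
    using finite_same_card_bij[of "UNIV :: 'n set" "{1..CARD('n)}"] by auto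
  define M :: "real^'n^'n" where "M = (\<chi> a b. \<phi> (g a) b)"
  have "M ** transpose M = mat 1"
    using orth bij_betwE[OF g] bij_betw_imp_inj_on[OF g]
    by (auto simp: vec_eq_iff matrix_matrix_mult_def transpose_def M_def mat_def inj_on_def)
  hence "(transpose M ** M) $ a $ b = mat 1 $ a $ b"
    using matrix_left_right_inverse by metis
  hence "(\<Sum>c\<in>UNIV. \<phi> (g c) a * \<phi> (g c) b) = (if a = b then 1 else 0)"
    by (simp add: matrix_matrix_mult_def transpose_def M_def mat_def)
  thus ?thesis using sum.reindex_bij_betw[OF g, of "\<lambda>k. \<phi> k a * \<phi> k b"] by simp
qed

definition weighted_degree :: "('n::finite \<Rightarrow> 'n \<Rightarrow> real) \<Rightarrow> 'n \<Rightarrow> real" where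
  "weighted_degree w i = (\<Sum>k\<in>UNIV. w i k)"

definition weighted_laplacian :: "('n::finite \<Rightarrow> 'n \<Rightarrow> real) \<Rightarrow> 'n \<Rightarrow> 'n \<Rightarrow> real" where
  "weighted_laplacian w i j = (if i = j then weighted_degree w i else 0) - w i j"

definition weighted_walk :: "('n::finite \<Rightarrow> 'n \<Rightarrow> real) \<Rightarrow> 'n \<Rightarrow> 'n \<Rightarrow> real" where
  "weighted_walk w i j = w i j / weighted_degree w i"

lemma weighted_laplacian_row_sum: "(\<Sum>b\<in>UNIV. weighted_laplacian w a b) = 0"
  by (simp add: weighted_laplacian_def weighted_degree_def sum_subtractf)

lemma weighted_laplacian_sym:
  assumes "\<And>a b. w a b = w b a"
  shows "weighted_laplacian w a b = weighted_laplacian w b a"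
  using assms by (simp add: weighted_laplacian_def)

lemma weighted_laplacian_apply:
  "(\<Sum>k\<in>UNIV. weighted_laplacian w i k * f k) = weighted_degree w i * f i - (\<Sum>k\<in>UNIV. w i k * f k)"
proof -
  have "(\<Sum>k\<in>UNIV. (if i = k then weighted_degree w i else 0) * f k) = weighted_degree w i * f i"
    by (simp add: if_distrib[of "\<lambda>x. x * f _"] cong: if_cong)
  thus ?thesis by (simp add: weighted_laplacian_def left_diff_distrib sum_subtractf)
qed

locale laplacian_eigenbasis =
  fixes w :: "'n::finite \<Rightarrow> 'n \<Rightarrow> real" and \<theta> :: "nat \<Rightarrow> real" and \<phi> :: "nat \<Rightarrow> 'n \<Rightarrow> real"
  assumes weight_sym: "\<And>a b. w a b = w b a"
    and weight_nonneg: "\<And>a b. 0 \<le> w a b"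
    and two_le_card: "2 \<le> CARD('n)"
    and eigen: "\<And>k a. k \<in> {2..CARD('n)} \<Longrightarrow>
      (\<Sum>b\<in>UNIV. weighted_laplacian w a b * \<phi> k b) = \<theta> k * \<phi> k a"
    and orthonormal: "\<And>k l. k \<in> {1..CARD('n)} \<Longrightarrow> l \<in> {1..CARD('n)} \<Longrightarrow>
      (\<Sum>i\<in>UNIV. \<phi> k i * \<phi> l i) = (if k = l then 1 else 0)"
    and eigenvalue_pos: "\<And>k. k \<in> {2..CARD('n)} \<Longrightarrow> 0 < \<theta> k"
begin

lemma laplacian_col_sum: "(\<Sum>a\<in>UNIV. weighted_laplacian w a b) = 0"
  using weighted_laplacian_row_sum[of w b] weighted_laplacian_sym[of w, OF weight_sym] by simp

lemma eigvec_sum_zero: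
  assumes "k \<in> {2..CARD('n)}"
  shows "(\<Sum>a\<in>UNIV. \<phi> k a) = 0"
proof -
  have "\<theta> k * (\<Sum>a\<in>UNIV. \<phi> k a) = (\<Sum>b\<in>UNIV. (\<Sum>a\<in>UNIV. weighted_laplacian w a b) * \<phi> k b)"
    using eigen[of k] assms
    by (simp add: sum_distrib_left sum_distrib_right sum.swap[of _ UNIV UNIV])
  thus ?thesis using eigenvalue_pos[OF assms] by (simp add: laplacian_col_sum)
qed

lemma sum_eigvec_prod: "(\<Sum>k = 1..CARD('n). \<phi> k a * \<phi> k b) = (if a = b then 1 else 0)"
  by (rule orthonormal_family_complete[OF orthonormal])

lemma sum_split_first_index: "(\<Sum>k = 1..CARD('n). f k) = f 1 + (\<Sum>k = 2..CARD('n). f k)"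
  using sum.atLeast_Suc_atMost[of 1 "CARD('n)" f] two_le_card by (simp add: numeral_2_eq_2)

lemma eigvec1_prod: "\<phi> 1 a * \<phi> 1 b = 1 / CARD('n)"
proof -
  define \<sigma> where "\<sigma> = (\<Sum>b\<in>UNIV. \<phi> 1 b)"
  have phi1_sigma: "\<phi> 1 a * \<sigma> = 1" for a
  proof -
    have "1 = (\<Sum>b\<in>UNIV. \<Sum>k = 1..CARD('n). \<phi> k a * \<phi> k b)"
      unfolding sum_eigvec_prod by simp
    also have "\<dots> = (\<Sum>k = 1..CARD('n). \<phi> k a * (\<Sum>b\<in>UNIV. \<phi> k b))"
      by (subst sum.swap) (simp add: sum_distrib_left)
    also have "\<dots> = \<phi> 1 a * \<sigma>"
      unfolding sum_split_first_index by (simp add: eigvec_sum_zero \<sigma>_def)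
    finally show ?thesis by simp
  qed
  have phi1_const: "\<phi> 1 i = \<phi> 1 a" for i a
    using phi1_sigma[of i] phi1_sigma[of a] by (metis mult_cancel_right mult_zero_right zero_neq_one)
  have "1 = (\<Sum>i\<in>UNIV. \<phi> 1 i * \<phi> 1 i)" using orthonormal[of 1 1] two_le_card by simp
  also have "\<dots> = (\<Sum>i::'n\<in>UNIV. \<phi> 1 a * \<phi> 1 b)"
    by (intro sum.cong refl) (metis phi1_const)
  finally show ?thesis by (simp add: field_simps)
qed

lemma sum_nontrivial_eigvec_prod:
  "(\<Sum>k = 2..CARD('n). \<phi> k a * \<phi> k b) = (if a = b then 1 else 0) - 1 / CARD('n)"
  using sum_eigvec_prod[of a b] unfolding sum_split_first_index eigvec1_prod by simp

text \<open>Positivity of the degrees is not an assumption: a vertex of degree zero would give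
  a second vector in the kernel of the Laplacian.\<close>

lemma degree_pos: "0 < weighted_degree w a"
proof (rule ccontr)
  assume "\<not> 0 < weighted_degree w a"
  hence "weighted_degree w a = 0"
    using weight_nonneg by (simp add: weighted_degree_def sum_nonneg order.antisym)
  hence "w a b = 0" for b
    using weight_nonneg by (simp add: weighted_degree_def sum_nonneg_eq_0_iff)
  hence "weighted_laplacian w a b = 0" for b
    using \<open>weighted_degree w a = 0\<close> by (cases "a = b") (simp_all add: weighted_laplacian_def)
  hence "\<phi> k a = 0" if "k \<in> {2..CARD('n)}" for k
    using eigen[of k a] eigenvalue_pos[OF that] that by simp
  moreover obtain b :: 'n where "b \<noteq> a"
  proof -
    have "UNIV \<noteq> {a}"
    proof
      assume "UNIV = {a}"
      hence "CARD('n) = card {a}" by (rule arg_cong)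
      with two_le_card show False by simp
    qed
    thus ?thesis using that by blast
  qed
  ultimately show False using sum_nontrivial_eigvec_prod[of a b] by simp
qed

definition green :: "'n \<Rightarrow> 'n \<Rightarrow> real" where
  "green a b = (\<Sum>k = 2..CARD('n). \<phi> k a * \<phi> k b / \<theta> k)"

lemma laplacian_green:
  "(\<Sum>c\<in>UNIV. weighted_laplacian w a c * green c b) = (if a = b then 1 else 0) - 1 / CARD('n)"
proof -
  have "(\<Sum>c\<in>UNIV. weighted_laplacian w a c * green c b)
      = (\<Sum>k = 2..CARD('n). (\<Sum>c\<in>UNIV. weighted_laplacian w a c * \<phi> k c) * \<phi> k b / \<theta> k)"
    unfolding green_def sum_distrib_left sum_distrib_right sum_divide_distrib
    by (subst sum.swap) (simp add: algebra_simps)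
  also have "\<dots> = (\<Sum>k = 2..CARD('n). \<phi> k a * \<phi> k b)"
    using eigen eigenvalue_pos by (intro sum.cong refl) (simp add: less_imp_neq[symmetric])
  finally show ?thesis by (simp add: sum_nontrivial_eigvec_prod)
qed

definition spectral_hitting_time :: "'n \<Rightarrow> 'n \<Rightarrow> real" where
  "spectral_hitting_time i j = (\<Sum>z\<in>UNIV. weighted_degree w z * (\<Sum>k = 2..CARD('n). (1 / \<theta> k) *
      (\<phi> k j ^ 2 - \<phi> k i * \<phi> k j - \<phi> k j * \<phi> k z + \<phi> k i * \<phi> k z)))"

lemma spectral_hitting_time_green:
  "spectral_hitting_time i j =
     (\<Sum>z\<in>UNIV. weighted_degree w z * (green j j - green i j - green j z + green i z))"
  unfolding spectral_hitting_time_def green_def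
  by (simp add: sum_subtractf[symmetric] sum.distrib[symmetric] power2_eq_square algebra_simps)

lemma spectral_hitting_time_self: "spectral_hitting_time j j = 0"
  by (simp add: spectral_hitting_time_green)

lemma laplacian_spectral_hitting_time:
  assumes "i \<noteq> j"
  shows "(\<Sum>k\<in>UNIV. weighted_laplacian w i k * spectral_hitting_time k j) = weighted_degree w i"
proof -
  have inner: "(\<Sum>k\<in>UNIV. weighted_laplacian w i k * (green j j - green k j - green j z + green k z))
      = (if i = z then 1 else 0)" for z
  proof -
    have "(\<Sum>k\<in>UNIV. weighted_laplacian w i k * (green j j - green k j - green j z + green k z))
        = (green j j - green j z) * (\<Sum>k\<in>UNIV. weighted_laplacian w i k)
          - (\<Sum>k\<in>UNIV. weighted_laplacian w i k * green k j)
          + (\<Sum>k\<in>UNIV. weighted_laplacian w i k * green k z)"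
      unfolding ring_distribs sum.distrib sum_subtractf sum_distrib_right[symmetric]
      by (simp add: algebra_simps)
    thus ?thesis using assms by (simp add: weighted_laplacian_row_sum laplacian_green)
  qed
  have "(\<Sum>k\<in>UNIV. weighted_laplacian w i k * spectral_hitting_time k j)
      = (\<Sum>z\<in>UNIV. weighted_degree w z *
          (\<Sum>k\<in>UNIV. weighted_laplacian w i k * (green j j - green k j - green j z + green k z)))"
    unfolding spectral_hitting_time_green sum_distrib_left
    by (subst sum.swap) (simp add: algebra_simps)
  also have "\<dots> = (\<Sum>z\<in>UNIV. if i = z then weighted_degree w z else 0)"
    by (intro sum.cong refl) (simp add: inner)
  also have "\<dots> = weighted_degree w i" by simp
  finally show ?thesis .
qed


lemma weighted_walk_nonneg: "0 \<le> weighted_walk w a b"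
  using weight_nonneg degree_pos[of a] by (simp add: weighted_walk_def)

lemma weighted_walk_stochastic: "(\<Sum>b\<in>UNIV. weighted_walk w a b) = 1"
  using degree_pos[of a] by (simp add: weighted_walk_def weighted_degree_def sum_divide_distrib[symmetric])

lemma spectral_hitting_time_step:
  assumes "i \<noteq> j"
  shows "spectral_hitting_time i j
    = 1 + taboo_step (weighted_walk w) j (\<lambda>k. spectral_hitting_time k j) i"
proof -
  let ?h = "\<lambda>k. spectral_hitting_time k j" and ?d = "weighted_degree w i"
  have "(\<Sum>k\<in>UNIV. weighted_walk w i k * ?h k) = ?h i - 1"
    using laplacian_spectral_hitting_time[OF assms] degree_pos[of i]
      weighted_laplacian_apply[of w i ?h]
    by (simp add: weighted_walk_def sum_divide_distrib[symmetric] field_simps)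
  thus ?thesis
    using sum_split_off[of "\<lambda>k. weighted_walk w i k * ?h k" j]
    by (simp add: taboo_step_def spectral_hitting_time_self)
qed

theorem hitting_time_weighted_walk: "hitting_time (weighted_walk w) i j = spectral_hitting_time i j"
proof (cases "i = j")
  case True
  thus ?thesis by (simp add: hitting_time_def spectral_hitting_time_self)
next
  case False
  show ?thesis
    by (rule hitting_time_eq_taboo_solution[OF weighted_walk_nonneg weighted_walk_stochastic
          spectral_hitting_time_step False])
qed


lemma sum_spectral_hitting_time:
  "(\<Sum>i\<in>UNIV. spectral_hitting_time i j) = real CARD('n) * (\<Sum>k = 2..CARD('n). (1 / \<theta> k) *
     ((\<Sum>z\<in>UNIV. weighted_degree w z) * \<phi> k j ^ 2 - \<phi> k j * (\<Sum>z\<in>UNIV. weighted_degree w z * \<phi> k z)))"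
proof -
  let ?s = "weighted_degree w"
  have over_i: "(\<Sum>i\<in>UNIV. \<phi> k j ^ 2 - \<phi> k i * \<phi> k j - \<phi> k j * \<phi> k z + \<phi> k i * \<phi> k z)
      = real CARD('n) * (\<phi> k j ^ 2 - \<phi> k j * \<phi> k z)" if "k \<in> {2..CARD('n)}" for k z
    using eigvec_sum_zero[OF that]
    by (simp add: sum.distrib sum_subtractf sum_distrib_right[symmetric] algebra_simps)
  have "(\<Sum>i\<in>UNIV. spectral_hitting_time i j) = (\<Sum>z\<in>UNIV. \<Sum>k = 2..CARD('n). ?s z * (1 / \<theta> k) *
      (\<Sum>i\<in>UNIV. \<phi> k j ^ 2 - \<phi> k i * \<phi> k j - \<phi> k j * \<phi> k z + \<phi> k i * \<phi> k z))"
    unfolding spectral_hitting_time_def sum_distrib_left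
    by (subst sum.swap) (simp add: sum.swap[of _ UNIV "{2..CARD('n)}"] mult.assoc)
  also have "\<dots> = (\<Sum>k = 2..CARD('n). \<Sum>z\<in>UNIV.
      real CARD('n) * ((1 / \<theta> k) * (?s z * \<phi> k j ^ 2 - \<phi> k j * (?s z * \<phi> k z))))"
  proof (subst sum.swap, intro sum.cong refl)
    fix k z assume "k \<in> {2..CARD('n)}"
    show "?s z * (1 / \<theta> k) *
        (\<Sum>i\<in>UNIV. \<phi> k j ^ 2 - \<phi> k i * \<phi> k j - \<phi> k j * \<phi> k z + \<phi> k i * \<phi> k z)
      = real CARD('n) * ((1 / \<theta> k) * (?s z * \<phi> k j ^ 2 - \<phi> k j * (?s z * \<phi> k z)))"
      by (simp only: over_i[OF \<open>k \<in> {2..CARD('n)}\<close>]) (simp add: algebra_simps)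
  qed
  also have "\<dots> = real CARD('n) * (\<Sum>k = 2..CARD('n). (1 / \<theta> k) *
      ((\<Sum>z\<in>UNIV. ?s z) * \<phi> k j ^ 2 - \<phi> k j * (\<Sum>z\<in>UNIV. ?s z * \<phi> k z)))"
    unfolding sum_distrib_left[of "real CARD('n)"]
    by (intro sum.cong refl)
       (simp add: sum_divide_distrib[symmetric] sum_distrib_left[symmetric] sum_distrib_right sum_subtractf)
  finally show ?thesis .
qed

theorem partial_mean_hitting_weighted_walk:
  "partial_mean_hitting (weighted_walk w) j =
     real CARD('n) / (real CARD('n) - 1) * (\<Sum>k = 2..CARD('n). (1 / \<theta> k) *
       ((\<Sum>z\<in>UNIV. weighted_degree w z) * \<phi> k j ^ 2 - \<phi> k j * (\<Sum>z\<in>UNIV. weighted_degree w z * \<phi> k z)))"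
  by (simp add: partial_mean_hitting_def hitting_time_weighted_walk sum_spectral_hitting_time)

theorem global_mean_hitting_weighted_walk:
  "global_mean_hitting (weighted_walk w) =
     (\<Sum>z\<in>UNIV. weighted_degree w z) / (real CARD('n) - 1) * (\<Sum>k = 2..CARD('n). 1 / \<theta> k)"
proof -
  let ?S = "\<Sum>z\<in>UNIV. weighted_degree w z"
  have "(\<Sum>j\<in>UNIV. (\<Sum>k = 2..CARD('n). (1 / \<theta> k) *
      (?S * \<phi> k j ^ 2 - \<phi> k j * (\<Sum>z\<in>UNIV. weighted_degree w z * \<phi> k z))))
      = (\<Sum>k = 2..CARD('n). (1 / \<theta> k) * (?S * (\<Sum>j\<in>UNIV. \<phi> k j * \<phi> k j)
          - (\<Sum>j\<in>UNIV. \<phi> k j) * (\<Sum>z\<in>UNIV. weighted_degree w z * \<phi> k z)))"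
  proof (subst sum.swap, intro sum.cong refl)
    fix k
    show "(\<Sum>j\<in>UNIV. c * (?S * \<phi> k j ^ 2 - \<phi> k j * u))
        = c * (?S * (\<Sum>j\<in>UNIV. \<phi> k j * \<phi> k j) - (\<Sum>j\<in>UNIV. \<phi> k j) * u)" for c u
      by (simp add: sum_distrib_left sum_distrib_right sum_subtractf power2_eq_square algebra_simps)
  qed
  also have "\<dots> = ?S * (\<Sum>k = 2..CARD('n). 1 / \<theta> k)"
    using orthonormal eigvec_sum_zero
    by (simp add: sum_distrib_left sum_divide_distrib)
  finally have sum_j: "(\<Sum>j\<in>UNIV. (\<Sum>k = 2..CARD('n). (1 / \<theta> k) *
      (?S * \<phi> k j ^ 2 - \<phi> k j * (\<Sum>z\<in>UNIV. weighted_degree w z * \<phi> k z))))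
      = ?S * (\<Sum>k = 2..CARD('n). 1 / \<theta> k)" .
  have row: "(\<Sum>j \<in> {j. j \<noteq> i}. hitting_time (weighted_walk w) i j)
      = (\<Sum>j\<in>UNIV. spectral_hitting_time i j)" for i
    using sum_split_off[of "spectral_hitting_time i" i]
    by (simp add: hitting_time_weighted_walk spectral_hitting_time_self)
  have "(\<Sum>i\<in>UNIV. \<Sum>j \<in> {j. j \<noteq> i}. hitting_time (weighted_walk w) i j)
      = (\<Sum>j\<in>UNIV. \<Sum>i\<in>UNIV. spectral_hitting_time i j)"
    unfolding row by (rule sum.swap)
  also have "\<dots> = real CARD('n) * (?S * (\<Sum>k = 2..CARD('n). 1 / \<theta> k))"
    by (simp only: sum_spectral_hitting_time sum_distrib_left[symmetric] sum_j)
  finally show ?thesis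
    using two_le_card by (simp add: global_mean_hitting_def field_simps)
qed

end

section \<open>The non-backtracking centrality random walk\<close>

lemma adjm_sym:
  assumes "simple_graph G"
  shows "adjm G a b = adjm G b a"
  using assms by (auto simp: simple_graph_def adjm_def)

lemma nb_centrality_nonneg:
  assumes "nb_perron_vector G lam v"
  shows "0 \<le> nb_centrality G v i"
  using assms by (auto simp: nb_perron_vector_def nb_centrality_def dir_edges_def intro!: sum_nonneg)

lemma card_ge_3_if_cycle:
  assumes "is_cycle G (vs :: 'n::finite list)"
  shows "3 \<le> CARD('n)"
proof -
  have "length vs = card (set vs)" using assms by (simp add: is_cycle_def distinct_card)
  also have "\<dots> \<le> CARD('n)" by (rule card_mono) auto
  finally show ?thesis using assms by (simp add: is_cycle_def)
qed

lemma sorted_tail_pos: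
  fixes \<theta> :: "nat \<Rightarrow> real"
  assumes "0 < \<theta> 2" and "\<forall>k. 2 \<le> k \<and> k < N \<longrightarrow> \<theta> k \<le> \<theta> (k + 1)" and "k \<in> {2..N}"
  shows "0 < \<theta> k"
proof -
  have "\<theta> 2 \<le> \<theta> m" if "2 \<le> m" "m \<le> N" for m
    using that
  proof (induction m rule: dec_induct)
    case (step m)
    thus ?case using assms(2) by force
  qed simp
  hence "\<theta> 2 \<le> \<theta> k" using assms(3) by simp
  with assms(1) show ?thesis by simp
qed

lemma strength_eq_weighted_degree: "strength G x = weighted_degree (nb_weight G x)"
  by (simp add: fun_eq_iff strength_def weighted_degree_def)

lemma total_strength_eq_sum_weighted_degree:
  "total_strength G x = (\<Sum>z\<in>UNIV. weighted_degree (nb_weight G x) z)"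
  by (simp add: total_strength_def weighted_degree_def)

lemma laplacian_eq_weighted_laplacian: "laplacian G x = weighted_laplacian (nb_weight G x)"
  by (simp add: fun_eq_iff laplacian_def weighted_laplacian_def strength_eq_weighted_degree)

lemma nbcrw_prob_eq_weighted_walk:
  assumes "\<And>i. weighted_degree (nb_weight G x) i \<noteq> 0"
  shows "nbcrw_prob G x = weighted_walk (nb_weight G x)"
proof (intro ext)
  fix i j
  have "weighted_degree (nb_weight G x) i = x i * (\<Sum>k\<in>UNIV. adjm G i k * x k)"
    by (simp add: weighted_degree_def nb_weight_def sum_distrib_left algebra_simps)
  thus "nbcrw_prob G x i j = weighted_walk (nb_weight G x) i j"
    using assms[of i] by (simp add: nbcrw_prob_def weighted_walk_def nb_weight_def)
qed

theorem theorem3: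
  fixes G :: "'n::finite \<Rightarrow> 'n \<Rightarrow> bool"
    and lam :: real and v :: "'n \<times> 'n \<Rightarrow> real"
    and \<theta> :: "nat \<Rightarrow> real" and \<phi> :: "nat \<Rightarrow> 'n \<Rightarrow> real"
  defines "N \<equiv> card (UNIV :: 'n set)"
    and "x \<equiv> nb_centrality G v"
  assumes simple: "simple_graph G"
    and conn: "connected_graph G"
    and not_tree: "\<not> is_tree G"
    and perron: "nb_perron_vector G lam v"
    and walk_defined: "\<forall>i. (\<Sum>k\<in>UNIV. adjm G i k * x k) \<noteq> 0"
    and eig: "\<forall>k \<in> {1..N}. \<forall>i. (\<Sum>j\<in>UNIV. laplacian G x i j * \<phi> k j) = \<theta> k * \<phi> k i"
    and orth: "\<forall>k \<in> {1..N}. \<forall>l \<in> {1..N}. (\<Sum>i\<in>UNIV. \<phi> k i * \<phi> l i) = (if k = l then 1 else 0)"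
    and theta1: "\<theta> 1 = 0"
    and theta2: "\<theta> 1 < \<theta> 2"
    and sorted: "\<forall>k. 2 \<le> k \<and> k < N \<longrightarrow> \<theta> k \<le> \<theta> (k + 1)"
  shows "(\<forall>i j. hitting_time (nbcrw_prob G x) i j =
            (\<Sum>z\<in>UNIV. strength G x z * (\<Sum>k = 2..N. (1 / \<theta> k) *
               (\<phi> k j ^ 2 - \<phi> k i * \<phi> k j - \<phi> k j * \<phi> k z + \<phi> k i * \<phi> k z))))
       \<and> (\<forall>j. partial_mean_hitting (nbcrw_prob G x) j =
            real N / (real N - 1) * (\<Sum>k = 2..N. (1 / \<theta> k) *
               (total_strength G x * \<phi> k j ^ 2 - \<phi> k j * (\<Sum>z\<in>UNIV. strength G x z * \<phi> k z))))
       \<and> global_mean_hitting (nbcrw_prob G x) = total_strength G x / (real N - 1) * (\<Sum>k = 2..N. 1 / \<theta> k)"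
proof -
  obtain vs where "is_cycle G vs" using conn not_tree by (auto simp: is_tree_def)
  have "0 \<le> x i" for i unfolding x_def by (rule nb_centrality_nonneg[OF perron])
  interpret laplacian_eigenbasis "nb_weight G x" \<theta> \<phi>
  proof
    show "nb_weight G x a b = nb_weight G x b a" for a b
      using adjm_sym[OF simple] by (simp add: nb_weight_def)
    show "0 \<le> nb_weight G x a b" for a b
      using \<open>\<And>i. 0 \<le> x i\<close> by (simp add: nb_weight_def adjm_def)
    show "2 \<le> CARD('n)" using card_ge_3_if_cycle[OF \<open>is_cycle G vs\<close>] by simp
  qed (use eig orth theta1 theta2 sorted sorted_tail_pos in
        \<open>simp_all add: N_def laplacian_eq_weighted_laplacian\<close>)
  have "nbcrw_prob G x = weighted_walk (nb_weight G x)"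
    using degree_pos by (intro nbcrw_prob_eq_weighted_walk) (metis less_irrefl)
  thus ?thesis
    unfolding N_def strength_eq_weighted_degree total_strength_eq_sum_weighted_degree
    by (simp add: hitting_time_weighted_walk spectral_hitting_time_def
        partial_mean_hitting_weighted_walk global_mean_hitting_weighted_walk)
qed

end
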